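(* Let $n\ge3$, $U\ge3$, run the modified chain $(X_t)$ started at $X_1=a$, and consider its transitions at times $1,\dots,4n-1$. For a state $b$, let $T(a,b)$ be the event that $X_{4n}=b$ and no major self-loop is taken at any of the states $1,1',n,n'$ during these transitions. For a state $j$, let $T'(a,j)$ be the event that during these transitions no major self-loop is taken at $1,1',n,n'$ and exactly one switching link is taken, at state $j$. Let $L_k$ be the event that exactly $k$ major self-loops are taken during these transitions. If $0\le k\le 2n-2$ and $k\equiv p(b)-p(a)\pmod 2$, then there exists a state $j$ (depending on $a,b,k$) such that $$T'(a,j)\cap L_k\subseteq T(a,b)\cap L_k.$$
   Context: Let $n\ge3$, $U\ge3$ be integers. The "modified chain" is a Markov chain on the $2n$ states $\{1,\dots,n,1',\dots,n'\}$ whose transitions are labeled edges (a multigraph). Every state has exactly three outgoing edges: a "major self-loop" with probability $1/2$, a "continuing link" with probability $\frac12(1-\frac1U)$, and a "switching link" with probability $\frac1{2U}$. Continuing links: $i\to i+1$ for $1\le i\le n-1$, $n\to n'$, $i'\to(i-1)'$ for $2\le i\le n$, $1'\to1$. Switching links: $i\to(i+1)'$ for $1\le i\le n-1$, $n\to n$, $i'\to i-1$ for $2\le i\le n$, $1'\to1'$ (at $n$ and $1'$ the switching link is a self-loop distinct from the major self-loop). The circular position of a state is $p(i)=i$ and $p(i')=2n+1-i$ for $1\le i\le n$, considered modulo $2n$. *)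

theory Defs
  imports Complex_Main
begin

text \<open>States of the modified chain: (i, False) is state i, (i, True) is state i',
  for 1 \<le> i \<le> n.  Every state has three labelled outgoing edges.\<close>

type_synonym mstate = "nat \<times> bool"

datatype link = Major | Cont | Switch

definition states :: "nat \<Rightarrow> mstate set" where
  "states n = {(i, b). 1 \<le> i \<and> i \<le> n}"

fun step :: "nat \<Rightarrow> mstate \<Rightarrow> link \<Rightarrow> mstate" where
  "step n s Major = s"
| "step n (i, False) Cont = (if i < n then (i + 1, False) else (n, True))"
| "step n (i, True) Cont = (if 2 \<le> i then (i - 1, True) else (1, False))"
| "step n (i, False) Switch = (if i < n then (i + 1, True) else (n, False))"
| "step n (i, True) Switch = (if 2 \<le> i then (i - 1, False) else (1, True))"

definition link_prob :: "nat \<Rightarrow> link \<Rightarrow> real" where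
  "link_prob U l = (case l of Major \<Rightarrow> 1/2 | Cont \<Rightarrow> (1/2) * (1 - 1 / real U)
                             | Switch \<Rightarrow> 1 / (2 * real U))"

fun pos :: "nat \<Rightarrow> mstate \<Rightarrow> int" where
  "pos n (i, False) = int i"
| "pos n (i, True) = 2 * int n + 1 - int i"

text \<open>Trajectory X_1, X_2, ... determined by the start state and the sequence of
  links taken; element t (0-based) of the list is X_(t+1).\<close>
fun traj :: "nat \<Rightarrow> mstate \<Rightarrow> link list \<Rightarrow> mstate list" where
  "traj n a [] = [a]"
| "traj n a (l # ls) = a # traj n (step n a l) ls"

definition special :: "nat \<Rightarrow> mstate set" where
  "special n = {(1, False), (1, True), (n, False), (n, True)}"

text \<open>Sample outcomes: sequences of the links taken at times 1, ..., 4n-1.\<close>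
definition outcomes :: "nat \<Rightarrow> link list set" where
  "outcomes n = {ls. length ls = 4 * n - 1}"

definition no_major_special :: "nat \<Rightarrow> mstate \<Rightarrow> link list \<Rightarrow> bool" where
  "no_major_special n a ls =
     (\<forall>t < length ls. ls ! t = Major \<longrightarrow> traj n a ls ! t \<notin> special n)"

definition evT :: "nat \<Rightarrow> mstate \<Rightarrow> mstate \<Rightarrow> link list set" where
  "evT n a b = {ls \<in> outcomes n. last (traj n a ls) = b \<and> no_major_special n a ls}"

definition evT' :: "nat \<Rightarrow> mstate \<Rightarrow> mstate \<Rightarrow> link list set" where
  "evT' n a j = {ls \<in> outcomes n. no_major_special n a ls
      \<and> card {t. t < length ls \<and> ls ! t = Switch} = 1
      \<and> (\<forall>t < length ls. ls ! t = Switch \<longrightarrow> traj n a ls ! t = j)}"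

definition evL :: "nat \<Rightarrow> nat \<Rightarrow> link list set" where
  "evL n k = {ls \<in> outcomes n. card {t. t < length ls \<and> ls ! t = Major} = k}"

end

theory Submission
  imports Defs "HOL-Number_Theory.Cong"
begin

(* Read every state through its circular position modulo 2n: a
   continuing link adds 1 to the position, a switching link negates it and a
   major self-loop keeps it.  Hence along a run of 4n-1 links with exactly
   one switching link, taken at state j, and k major self-loops,
       pos X_4n = pos a + (4n-2-k) - 2 pos j   (mod 2n),
   whatever else happens along the run.  The parity hypothesis makes
   d = pos a + 4n-2-k - pos b even, so some unprimed state j has
   2 pos j = d (mod 2n); for this j every run in T'(a,j) and L_k ends at a
   state with the position of b, hence at b, because distinct states have
   distinct positions modulo 2n. *)

lemma step_in_states: "s \<in> states n \<Longrightarrow> step n s l \<in> states n"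
  by (cases s; cases "snd s"; cases l) (auto simp: states_def)

lemma pos_step_Cont:
  assumes "s \<in> states n"
  shows "[pos n (step n s Cont) = pos n s + 1] (mod 2 * int n)"
proof -
  obtain i c where s: "s = (i, c)" and i: "1 \<le> i" "i \<le> n"
    using assms by (cases s) (auto simp: states_def)
  consider "c" "i = 1" | "c" "2 \<le> i" | "\<not> c" "i < n" | "\<not> c" "i = n"
    using i by linarith
  then show ?thesis
  proof cases
    case 1
    then have "pos n (step n s Cont) = pos n s + 1 - 2 * int n" using s by simp
    then show ?thesis by (simp add: cong_iff_dvd_diff)
  qed (use s in \<open>auto simp: of_nat_diff cong_iff_dvd_diff\<close>)
qed

lemma pos_step_Switch:
  assumes "s \<in> states n"
  shows "[pos n (step n s Switch) = - pos n s] (mod 2 * int n)"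
proof -
  obtain i c where s: "s = (i, c)" and i: "1 \<le> i" "i \<le> n"
    using assms by (cases s) (auto simp: states_def)
  consider "c" "i = 1" | "c" "2 \<le> i" | "\<not> c" "i < n" | "\<not> c" "i = n"
    using i by linarith
  then have "pos n (step n s Switch) + pos n s \<in> {2 * int n, 4 * int n}"
    by cases (use s in \<open>auto simp: of_nat_diff\<close>)
  then have "2 * int n dvd pos n (step n s Switch) + pos n s"
    by auto
  then show ?thesis by (simp add: cong_iff_dvd_diff)
qed

text \<open>Positions range over \<open>1, \<dots>, 2n\<close>, so distinct states have positions
  that are distinct modulo 2n.\<close>
lemma pos_cong_imp_eq:
  assumes "s \<in> states n" "t \<in> states n" "[pos n s = pos n t] (mod 2 * int n)"
  shows "s = t"
proof -
  have range: "0 \<le> pos n u - 1" "pos n u - 1 < 2 * int n" if "u \<in> states n" for u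
    using that by (cases u; cases "snd u"; auto simp: states_def)+
  have "pos n s - 1 = pos n t - 1"
  proof (rule cong_less_imp_eq_int)
    show "[pos n s - 1 = pos n t - 1] (mod 2 * int n)"
      using assms(3) by (simp add: cong_diff)
  qed (use range assms(1,2) in auto)
  then show ?thesis
    using assms(1,2) by (cases s; cases t; cases "snd s"; cases "snd t") (auto simp: states_def)
qed

lemma traj_not_Nil [simp]: "traj n a ls \<noteq> []"
  by (cases ls) auto

lemma last_traj_append:
  "last (traj n a (xs @ ys)) = last (traj n (last (traj n a xs)) ys)"
  by (induction xs arbitrary: a) (auto simp: last_ConsR)

lemma traj_nth_length:
  "traj n a (xs @ ys) ! length xs = last (traj n a xs)"
proof (induction xs arbitrary: a)
  case Nil
  show ?case by (cases ys) auto
qed (auto simp: last_ConsR)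

lemma switch_free_run:
  assumes "a \<in> states n" "Switch \<notin> set ys"
  shows "last (traj n a ys) \<in> states n \<and>
    [pos n (last (traj n a ys)) = pos n a + int (count_list ys Cont)] (mod 2 * int n)"
  using assms
proof (induction ys arbitrary: a)
  case Nil
  then show ?case by simp
next
  case (Cons l ys)
  have last_eq: "last (traj n a (l # ys)) = last (traj n (step n a l) ys)"
    by (simp add: last_ConsR)
  have IH: "last (traj n (step n a l) ys) \<in> states n"
      "[pos n (last (traj n (step n a l) ys)) = pos n (step n a l) + int (count_list ys Cont)]
        (mod 2 * int n)"
    using Cons step_in_states by auto
  have "l \<noteq> Switch" using Cons.prems by auto
  then have "[pos n (step n a l) = pos n a + int (count_list [l] Cont)] (mod 2 * int n)"
    using Cons.prems pos_step_Cont by (cases l) auto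
  from cong_add[OF this cong_refl[of "int (count_list ys Cont)"]]
  have "[pos n (step n a l) + int (count_list ys Cont)
      = pos n a + int (count_list (l # ys) Cont)] (mod 2 * int n)"
    by (simp add: count_list_append[of "[l]" ys, simplified] add.assoc)
  then show ?case
    using IH last_eq by (auto intro: cong_trans)
qed

lemma link_counts:
  "count_list ls Major + count_list ls Cont + count_list ls Switch = length ls"
proof (induction ls)
  case (Cons l ls)
  then show ?case by (cases l) auto
qed simp

lemma card_positions_eq_count_list:
  "card {t. t < length ls \<and> ls ! t = x} = count_list ls x"
  by (simp add: count_list_eq_length_filter length_filter_conv_card eq_commute)

lemma one_switch_run:
  assumes "a \<in> states n" "Switch \<notin> set xs" "Switch \<notin> set ys"
    and q: "q = last (traj n a xs)"
  shows "last (traj n a (xs @ Switch # ys)) \<in> states n \<and>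
    [pos n (last (traj n a (xs @ Switch # ys)))
      = pos n a + int (count_list (xs @ ys) Cont) - 2 * pos n q] (mod 2 * int n)"
proof -
  define r where "r = step n q Switch"
  have q_run: "q \<in> states n" "[pos n q = pos n a + int (count_list xs Cont)] (mod 2 * int n)"
    using switch_free_run[OF assms(1,2)] q by auto
  have r_st: "r \<in> states n" and r_pos: "[pos n r = - pos n q] (mod 2 * int n)"
    using step_in_states pos_step_Switch q_run(1) r_def by auto
  have end_eq: "last (traj n a (xs @ Switch # ys)) = last (traj n r ys)"
    using last_traj_append[of n a xs "Switch # ys"] last_traj_append[of n q "[Switch]" ys]
    by (simp add: q r_def)
  have r_run: "last (traj n r ys) \<in> states n"
      "[pos n (last (traj n r ys)) = pos n r + int (count_list ys Cont)] (mod 2 * int n)"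
    using switch_free_run[OF r_st assms(3)] by auto
  have split: "pos n (last (traj n r ys))
        - (pos n a + int (count_list (xs @ ys) Cont) - 2 * pos n q)
      = (pos n (last (traj n r ys)) - (pos n r + int (count_list ys Cont)))
        + (pos n r - - pos n q) + (pos n q - (pos n a + int (count_list xs Cont)))"
    by simp
  then have "[pos n (last (traj n r ys))
      = pos n a + int (count_list (xs @ ys) Cont) - 2 * pos n q] (mod 2 * int n)"
    unfolding cong_iff_dvd_diff split
    using r_run(2) r_pos q_run(2) by (intro dvd_add) (simp_all add: cong_iff_dvd_diff)
  then show ?thesis
    using end_eq r_run(1) by simp
qed

lemma single_switch_endpoint:
  assumes "a \<in> states n"
    and one: "count_list ls Switch = 1"
    and at_j: "\<forall>t < length ls. ls ! t = Switch \<longrightarrow> traj n a ls ! t = j"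
  shows "last (traj n a ls) \<in> states n \<and>
    [pos n (last (traj n a ls))
      = pos n a + int (length ls) - 1 - int (count_list ls Major) - 2 * pos n j] (mod 2 * int n)"
proof -
  obtain xs ys where ls: "ls = xs @ Switch # ys" and "Switch \<notin> set xs"
      and "count_list ys Switch = 0"
    using count_list_Suc_split_first[of ls Switch 0] one by auto
  then have free: "Switch \<notin> set xs" "Switch \<notin> set ys" by (auto simp: count_list_0_iff)
  have "traj n a ls ! length xs = j"
    using at_j ls by auto
  then have q: "j = last (traj n a xs)"
    using traj_nth_length[of n a xs "Switch # ys"] ls by simp
  have "int (count_list (xs @ ys) Cont) = int (length ls) - 1 - int (count_list ls Major)"
    using link_counts[of ls] one ls by simp
  then have rewrite: "pos n a + int (count_list (xs @ ys) Cont) - 2 * pos n j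
      = pos n a + int (length ls) - 1 - int (count_list ls Major) - 2 * pos n j"
    by linarith
  show ?thesis
    using one_switch_run[OF assms(1) free q] unfolding ls[symmetric] rewrite .
qed

lemma single_switch_runs_end_at:
  assumes "n \<ge> 1" "a \<in> states n" "b \<in> states n"
    and j: "[2 * pos n j = pos n a + 4 * int n - 2 - int k - pos n b] (mod 2 * int n)"
  shows "evT' n a j \<inter> evL n k \<subseteq> evT n a b"
proof
  fix ls assume ls: "ls \<in> evT' n a j \<inter> evL n k"
  then have len: "length ls = 4 * n - 1" and one: "count_list ls Switch = 1"
    and major: "count_list ls Major = k"
    and at_j: "\<forall>t < length ls. ls ! t = Switch \<longrightarrow> traj n a ls ! t = j"
    by (auto simp: evT'_def evL_def outcomes_def card_positions_eq_count_list)
  define d where "d = pos n a + 4 * int n - 2 - int k - pos n b"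
  have final_pos: "pos n a + int (length ls) - 1 - int (count_list ls Major) - 2 * pos n j
      = pos n b + (d - 2 * pos n j)"
    using len major assms(1) by (simp add: d_def of_nat_diff)
  have end_run: "last (traj n a ls) \<in> states n"
      "[pos n (last (traj n a ls)) = pos n b + (d - 2 * pos n j)] (mod 2 * int n)"
    using single_switch_endpoint[OF assms(2) one at_j] unfolding final_pos by simp_all
  have "[pos n b + (d - 2 * pos n j) = pos n b + 0] (mod 2 * int n)"
    using j unfolding d_def[symmetric]
    by (intro cong_add cong_refl) (simp add: cong_iff_dvd_diff dvd_diff_commute)
  then have "last (traj n a ls) = b"
    using pos_cong_imp_eq[OF end_run(1) assms(3)] end_run(2) cong_trans by auto
  then show "ls \<in> evT n a b"
    using ls by (auto simp: evT_def evT'_def)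
qed

lemma exists_state_double_pos:
  assumes "n \<ge> 1" "even d"
  shows "\<exists>j \<in> states n. [2 * pos n j = d] (mod 2 * int n)"
proof -
  define P where "P = nat ((d div 2 - 1) mod int n) + 1"
  have P_int: "int P = (d div 2 - 1) mod int n + 1"
    using assms(1) by (simp add: P_def)
  have "0 \<le> (d div 2 - 1) mod int n" "(d div 2 - 1) mod int n < int n"
    using assms(1) by simp_all
  then have P_range: "1 \<le> P" "P \<le> n"
    using P_int by linarith+
  have "[int P = (d div 2 - 1) + 1] (mod int n)"
    unfolding P_int by (intro cong_add cong_mod_leftI cong_refl)
  then have "int n dvd int P - d div 2"
    by (simp add: cong_iff_dvd_diff)
  then have "2 * int n dvd 2 * int P - 2 * (d div 2)"
    by (metis mult_dvd_mono dvd_refl right_diff_distrib)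
  then have "[2 * pos n (P, False) = d] (mod 2 * int n)"
    using assms(2) by (simp add: cong_iff_dvd_diff)
  moreover have "(P, False) \<in> states n"
    using P_range by (simp add: states_def)
  ultimately show ?thesis by blast
qed

theorem lemma10:
  fixes n U k :: nat and a b :: mstate
  assumes "n \<ge> 3" and "U \<ge> 3"
    and "a \<in> states n" and "b \<in> states n"
    and "k \<le> 2 * n - 2"
    and "int k mod 2 = (pos n b - pos n a) mod 2"
  shows "\<exists>j \<in> states n. evT' n a j \<inter> evL n k \<subseteq> evT n a b \<inter> evL n k"
proof -
  define d where "d = pos n a + 4 * int n - 2 - int k - pos n b"
  have "2 dvd int k - (pos n b - pos n a)"
    using assms(6) by (simp add: mod_eq_dvd_iff)
  moreover have "d = 2 * (2 * int n - 1 - (pos n b - pos n a)) - (int k - (pos n b - pos n a))"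
    by (simp add: d_def algebra_simps)
  ultimately have "even d"
    by (metis dvd_diff dvd_triv_left)
  then obtain j where "j \<in> states n" "[2 * pos n j = d] (mod 2 * int n)"
    using exists_state_double_pos[of n d] assms(1) by auto
  moreover from this(2) have "evT' n a j \<inter> evL n k \<subseteq> evT n a b"
    using single_switch_runs_end_at assms(1,3,4) unfolding d_def by simp
  ultimately show ?thesis
    by blast
qed

end
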